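(* Let $4\le r\le 7$, let $M$ be a monomial ideal in $k[E_r]$, let $m\in\mathbb{N}$, and for $a=(a_1,\dots,a_r)$ put $D_a=m\ell+a_1e_1+\dots+a_re_r\in\mathrm{Pic}(X_r)$. Suppose that, for all $a$ with all $a_i$ sufficiently large, the dimension $\dim_k\bigl(k[E_r]/M\bigr)_{D_a}$ or the dimension $\dim_k\bigl(k[E_r]/(M:(e_1\cdots e_r)^\infty)\bigr)_{D_a}$ does not depend on $a$. Then, for all $a_i$ sufficiently large, $\dim_k\bigl(k[E_r]/M\bigr)_{D_a}=\dim_k\bigl(k[E_r]/(M:(e_1\cdots e_r)^\infty)\bigr)_{D_a}$.
   Context: $\mathrm{Pic}(X_r)\cong\mathbb{Z}^{r+1}$ has basis $\ell,e_1,\dots,e_r$ with $\ell^2=1$, $\ell\cdot e_j=0$, $e_i\cdot e_j=-\delta_{ij}$, $K=-3\ell+\sum e_i$ (here $X_r$ is the blow up of $\mathbb{P}^2$ at $r$ points in general position). $E_r$ is the finite set of classes $E\in\mathrm{Pic}(X_r)$ with $K\cdot E=E^2=-1$. $k[E_r]$ is the polynomial ring with one variable for each $E\in E_r$, graded by $\mathrm{Pic}(X_r)$ via $\deg=E$; the variables of the classes $e_1,\dots,e_r$ are also denoted $e_1,\dots,e_r$. $(M:f^\infty)=\bigcup_k(M:f^k)$ denotes saturation. *)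

theory Defs
  imports Complex_Main "HOL-Library.Poly_Mapping"
begin

text \<open>Pic(X_r) = Z^(r+1) is represented by functions nat => int supported on {0..r};
  coordinate 0 is the coefficient of l, coordinate i (1 <= i <= r) that of e_i.\<close>

type_synonym pic = "nat \<Rightarrow> int"

definition in_pic :: "nat \<Rightarrow> pic \<Rightarrow> bool" where
  "in_pic r x \<longleftrightarrow> (\<forall>j. j > r \<longrightarrow> x j = 0)"

definition inter :: "nat \<Rightarrow> pic \<Rightarrow> pic \<Rightarrow> int" where
  "inter r x y = x 0 * y 0 - (\<Sum>i=1..r. x i * y i)"

definition canon :: "nat \<Rightarrow> pic" where
  "canon r = (\<lambda>j. if j = 0 then -3 else if j \<le> r then 1 else 0)"

definition ecls :: "nat \<Rightarrow> pic" where
  "ecls i = (\<lambda>j. if j = i then 1 else 0)"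

definition Exc :: "nat \<Rightarrow> pic set" where
  "Exc r = {E. in_pic r E \<and> inter r (canon r) E = -1 \<and> inter r E E = -1}"

text \<open>Polynomials in variables indexed by classes; k[E_r] is the subring of polynomials
  whose monomials only involve the variables indexed by E_r.\<close>

type_synonym 'k cpoly = "(pic \<Rightarrow>\<^sub>0 nat) \<Rightarrow>\<^sub>0 'k"

definition kE :: "nat \<Rightarrow> ('k::field) cpoly set" where
  "kE r = {p. \<forall>\<alpha>\<in>Poly_Mapping.keys p. Poly_Mapping.keys \<alpha> \<subseteq> Exc r}"

definition mdeg :: "(pic \<Rightarrow>\<^sub>0 nat) \<Rightarrow> pic" where
  "mdeg \<alpha> = (\<lambda>j. \<Sum>E\<in>Poly_Mapping.keys \<alpha>. int (Poly_Mapping.lookup \<alpha> E) * E j)"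

definition hcomp :: "nat \<Rightarrow> pic \<Rightarrow> ('k::field) cpoly set" where
  "hcomp r D = {p \<in> kE r. \<forall>\<alpha>\<in>Poly_Mapping.keys p. mdeg \<alpha> = D}"

definition monom1 :: "(pic \<Rightarrow>\<^sub>0 nat) \<Rightarrow> ('k::field) cpoly" where
  "monom1 \<alpha> = Poly_Mapping.single \<alpha> 1"

definition is_ideal :: "nat \<Rightarrow> ('k::field) cpoly set \<Rightarrow> bool" where
  "is_ideal r I \<longleftrightarrow> I \<subseteq> kE r \<and> 0 \<in> I \<and> (\<forall>p\<in>I. \<forall>q\<in>I. p + q \<in> I)
     \<and> (\<forall>p\<in>kE r. \<forall>q\<in>I. p * q \<in> I)"

definition ideal_gen :: "nat \<Rightarrow> ('k::field) cpoly set \<Rightarrow> 'k cpoly set" where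
  "ideal_gen r S = \<Inter>{I. is_ideal r I \<and> S \<subseteq> I}"

definition monomial_ideal :: "nat \<Rightarrow> ('k::field) cpoly set \<Rightarrow> bool" where
  "monomial_ideal r M \<longleftrightarrow> is_ideal r M \<and>
     (\<exists>A. (\<forall>\<alpha>\<in>A. Poly_Mapping.keys \<alpha> \<subseteq> Exc r) \<and> M = ideal_gen r (monom1 ` A))"

definition saturation :: "nat \<Rightarrow> ('k::field) cpoly set \<Rightarrow> 'k cpoly \<Rightarrow> 'k cpoly set" where
  "saturation r M f = {p \<in> kE r. \<exists>n. f ^ n * p \<in> M}"

definition eprod :: "nat \<Rightarrow> (pic \<Rightarrow>\<^sub>0 nat)" where
  "eprod r = (\<Sum>i=1..r. Poly_Mapping.single (ecls i) 1)"

definition pscale :: "'k::field \<Rightarrow> 'k cpoly \<Rightarrow> 'k cpoly" where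
  "pscale c p = Poly_Mapping.map (\<lambda>x. c * x) p"

definition kdim :: "('k::field) cpoly set \<Rightarrow> nat" where
  "kdim S = vector_space.dim pscale S"

text \<open>dim_k (k[E_r]/I)_D = dim_k k[E_r]_D - dim_k I_D (all graded pieces are finite dimensional).\<close>
definition qdim :: "nat \<Rightarrow> ('k::field) cpoly set \<Rightarrow> pic \<Rightarrow> nat" where
  "qdim r I D = kdim (hcomp r D :: 'k cpoly set) - kdim (I \<inter> hcomp r D)"

definition Dcls :: "nat \<Rightarrow> nat \<Rightarrow> (nat \<Rightarrow> int) \<Rightarrow> pic" where
  "Dcls r m a = (\<lambda>j. if j = 0 then int m else if j \<le> r then a j else 0)"

end

theory Submission
  imports Defs "HOL-Analysis.Convex"
begin

(* Write E in E_r as d l + c_1 e_1 + ... + c_r e_r.  Then sum c_i = 1 - 3d and sum c_i^2 = d^2 + 1,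
   so Cauchy-Schwarz gives 0 <= d <= 3 for r <= 7; hence all |c_i| <= 4 and E_r is finite, d = 0
   only for the classes e_i, and c_j <= d whenever E <> e_j.  A monomial of degree D_a is thus a
   monomial in the classes with d >= 1 with exponents at most m (finitely many possibilities)
   times e_1^b_1 ... e_r^b_r with b_i >= a_i - m.  For each of the finitely many first factors,
   if some power of e_1...e_r times it is divisible by a generator of M, a fixed one is; once all
   a_i exceed m plus these finitely many exponents, the monomials of degree D_a in
   (M : (e_1...e_r)^infinity) are already in M. *)

lemma Exc_coordinate_sums:
  assumes "E \<in> Exc r"
  shows "(\<Sum>i=1..r. E i) = 1 - 3 * E 0" and "(\<Sum>i=1..r. (E i)\<^sup>2) = (E 0)\<^sup>2 + 1"
proof -
  have "(\<Sum>i=1..r. canon r i * E i) = (\<Sum>i=1..r. E i)"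
    by (rule sum.cong) (auto simp: canon_def)
  then show "(\<Sum>i=1..r. E i) = 1 - 3 * E 0"
    using assms by (simp add: Exc_def inter_def canon_def)
  show "(\<Sum>i=1..r. (E i)\<^sup>2) = (E 0)\<^sup>2 + 1"
    using assms by (simp add: Exc_def inter_def power2_eq_square)
qed

lemma Exc_degree_bounds:
  assumes "E \<in> Exc r" and "r \<le> 7"
  shows "0 \<le> E 0" and "E 0 \<le> 3"
proof -
  have "real_of_int ((1 - 3 * E 0)\<^sup>2) \<le> real_of_int ((E 0)\<^sup>2 + 1) * card {1..r}"
    using sum_squared_le_sum_of_squares[of "\<lambda>i. real_of_int (E i)" "{1..r}"]
    by (simp flip: Exc_coordinate_sums[OF assms(1)])
  then have "(1 - 3 * E 0)\<^sup>2 \<le> ((E 0)\<^sup>2 + 1) * int r"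
    by (metis card_atLeastAtMost diff_Suc_1 of_int_le_iff of_int_mult of_int_of_nat_eq)
  also have "\<dots> \<le> ((E 0)\<^sup>2 + 1) * 7"
    using assms(2) by (intro mult_left_mono) auto
  finally have quadratic: "(E 0) * (2 * E 0 - 6) \<le> 6"
    by (simp add: power2_eq_square algebra_simps)
  show "0 \<le> E 0"
  proof (rule ccontr)
    assume "\<not> 0 \<le> E 0"
    then have "1 * 8 \<le> (- E 0) * (6 - 2 * E 0)" by (intro mult_mono) auto
    with quadratic show False by (simp add: algebra_simps)
  qed
  show "E 0 \<le> 3"
  proof (rule ccontr)
    assume "\<not> E 0 \<le> 3"
    then have "4 * 2 \<le> E 0 * (2 * E 0 - 6)" by (intro mult_mono) auto
    with quadratic show False by simp
  qed
qed

lemma Exc_coordinate_bound: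
  assumes "E \<in> Exc r" and "r \<le> 7" and "i \<in> {1..r}"
  shows "\<bar>E i\<bar> \<le> 4"
proof -
  have "(E i)\<^sup>2 \<le> (\<Sum>i=1..r. (E i)\<^sup>2)"
    using assms(3) by (intro member_le_sum) auto
  also have "\<dots> \<le> 3\<^sup>2 + 1"
    using Exc_coordinate_sums(2)[OF assms(1)] Exc_degree_bounds[OF assms(1,2)]
      power_mono[of "E 0" 3 2] by simp
  finally show ?thesis
    by (simp add: power2_le_iff_abs_le[symmetric])
qed

lemma finite_Exc:
  assumes "r \<le> 7"
  shows "finite (Exc r)"
proof (rule finite_subset)
  show "Exc r \<subseteq> {E. \<forall>j. (j \<in> {0..r} \<longrightarrow> E j \<in> {-4..4}) \<and> (j \<notin> {0..r} \<longrightarrow> E j = 0)}"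
  proof safe
    fix E j assume E: "E \<in> Exc r" and j: "j \<in> {0..r}"
    then show "E j \<in> {-4..4}"
      using Exc_degree_bounds[OF E assms] Exc_coordinate_bound[OF E assms, of j]
      by (cases "j = 0") auto
  qed (auto simp: Exc_def in_pic_def)
qed (rule finite_set_of_finite_funs; simp)

lemma Exc_degree_zero:
  assumes E: "E \<in> Exc r" and "E 0 = 0"
  shows "E \<in> ecls ` {1..r}"
proof -
  have sum1: "(\<Sum>i=1..r. E i) = 1" and sumsq1: "(\<Sum>i=1..r. (E i)\<^sup>2) = 1"
    using Exc_coordinate_sums[OF E] \<open>E 0 = 0\<close> by simp_all
  have "(\<Sum>i=1..r. (E i)\<^sup>2 - E i) = 0"
    using sum1 sumsq1 by (simp add: sum_subtractf)
  moreover have "0 \<le> x\<^sup>2 - x" for x :: int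
    by (cases "x \<le> 0") (auto simp: power2_eq_square mult_le_cancel_left1)
  ultimately have "\<forall>i\<in>{1..r}. (E i)\<^sup>2 - E i = 0"
    by (subst sum_nonneg_eq_0_iff[symmetric]) auto
  then have zero_one: "E i = 0 \<or> E i = 1" if "i \<in> {1..r}" for i
    using that by (auto simp: power2_eq_square algebra_simps)
  obtain j where j: "j \<in> {1..r}" "E j = 1"
    using sum1 zero_one by (metis (no_types, lifting) sum.neutral zero_neq_one)
  have "(\<Sum>i\<in>{1..r}-{j}. E i) = 0"
    using sum1 j by (simp add: sum.remove)
  then have others: "E i = 0" if "i \<in> {1..r}" "i \<noteq> j" for i
    using that zero_one by (subst (asm) sum_nonneg_eq_0_iff) force+
  have "E = ecls j"
  proof
    fix k
    show "E k = ecls j k"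
      using E j others \<open>E 0 = 0\<close>
      by (cases "k = 0"; cases "k \<le> r") (auto simp: ecls_def Exc_def in_pic_def)
  qed
  with j show ?thesis by blast
qed

lemma Exc_coordinate_le_degree:
  assumes E: "E \<in> Exc r" and "0 \<le> E 0" and "1 \<le> j" and "E \<noteq> ecls j"
  shows "E j \<le> E 0"
proof (cases "E 0 = 0")
  case True
  with Exc_degree_zero[OF E] \<open>E \<noteq> ecls j\<close> \<open>1 \<le> j\<close> show ?thesis
    by (auto simp: ecls_def)
next
  case False
  show ?thesis
  proof (cases "j \<le> r")
    case True
    have "\<bar>E j\<bar>\<^sup>2 \<le> (\<Sum>i=1..r. (E i)\<^sup>2)"
      using True \<open>1 \<le> j\<close> by (simp only: power2_abs) (intro member_le_sum; simp)
    also have "\<dots> < (E 0 + 1)\<^sup>2"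
      using Exc_coordinate_sums(2)[OF E] False \<open>0 \<le> E 0\<close>
      by (simp add: power2_eq_square algebra_simps)
    finally have "\<bar>E j\<bar>\<^sup>2 < (E 0 + 1)\<^sup>2" .
    then have "\<bar>E j\<bar> < E 0 + 1"
      by (rule power_less_imp_less_base) (use \<open>0 \<le> E 0\<close> in simp)
    then show ?thesis by simp
  next
    case False
    then show ?thesis using E \<open>0 \<le> E 0\<close> by (simp add: Exc_def in_pic_def)
  qed
qed

lemma Exc_degree_pos:
  assumes "E \<in> Exc r" and "r \<le> 7" and "E \<notin> ecls ` {1..r}"
  shows "1 \<le> E 0"
  using Exc_degree_bounds[OF assms(1,2)] Exc_degree_zero[OF assms(1)] assms(3)
  by fastforce

lemma sum_single_lookup:
  fixes p :: "'a \<Rightarrow>\<^sub>0 'b::comm_monoid_add"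
  shows "(\<Sum>\<alpha>\<in>Poly_Mapping.keys p. Poly_Mapping.single \<alpha> (Poly_Mapping.lookup p \<alpha>)) = p"
  by (rule poly_mapping_eqI) (simp add: lookup_sum lookup_single when_def in_keys_iff)

lemma lookup_single_1_mult:
  fixes p :: "('a \<Rightarrow>\<^sub>0 nat) \<Rightarrow>\<^sub>0 'b::comm_semiring_1"
  shows "Poly_Mapping.lookup (Poly_Mapping.single \<gamma> 1 * p) (\<gamma> + \<alpha>) = Poly_Mapping.lookup p \<alpha>"
  by (simp add: lookup_mult lookup_single when_mult)

definition mon_ideal :: "nat \<Rightarrow> (pic \<Rightarrow>\<^sub>0 nat) set \<Rightarrow> ('k::field) cpoly set" where
  "mon_ideal r A = {p \<in> kE r. \<forall>\<alpha>\<in>Poly_Mapping.keys p.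
     \<exists>\<beta>\<in>A. Poly_Mapping.lookup \<beta> \<le> Poly_Mapping.lookup \<alpha>}"

lemma is_ideal_mon_ideal: "is_ideal r (mon_ideal r A)"
proof -
  have mult_closed: "p * q \<in> mon_ideal r A" if p: "p \<in> kE r" and q: "q \<in> mon_ideal r A" for p q
  proof -
    have "Poly_Mapping.keys \<gamma> \<subseteq> Exc r \<and> (\<exists>\<beta>\<in>A. Poly_Mapping.lookup \<beta> \<le> Poly_Mapping.lookup \<gamma>)"
      if "\<gamma> \<in> Poly_Mapping.keys (p * q)" for \<gamma>
    proof -
      obtain a b where ab: "\<gamma> = a + b" "a \<in> Poly_Mapping.keys p" "b \<in> Poly_Mapping.keys q"
        using keys_mult[of p q] \<open>\<gamma> \<in> Poly_Mapping.keys (p * q)\<close> by blast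
      have "Poly_Mapping.keys a \<subseteq> Exc r" "Poly_Mapping.keys b \<subseteq> Exc r"
        using ab p q by (auto simp: kE_def mon_ideal_def)
      then have "Poly_Mapping.keys \<gamma> \<subseteq> Exc r"
        using ab(1) keys_add[of a b] by blast
      moreover obtain \<beta> where "\<beta> \<in> A" "Poly_Mapping.lookup \<beta> \<le> Poly_Mapping.lookup b"
        using ab(3) q by (auto simp: mon_ideal_def)
      moreover have "Poly_Mapping.lookup b \<le> Poly_Mapping.lookup \<gamma>"
        by (simp add: ab(1) lookup_add le_fun_def)
      ultimately show ?thesis by (blast intro: order_trans)
    qed
    then show ?thesis by (auto simp: mon_ideal_def kE_def)
  qed
  have add_closed: "p + q \<in> mon_ideal r A" if "p \<in> mon_ideal r A" "q \<in> mon_ideal r A" for p q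
    using that keys_add[of p q] unfolding mon_ideal_def kE_def by blast
  show ?thesis
    unfolding is_ideal_def
  proof (intro conjI ballI)
    show "mon_ideal r A \<subseteq> kE r" by (auto simp: mon_ideal_def)
    show "0 \<in> mon_ideal r A" by (simp add: mon_ideal_def kE_def)
  qed (simp_all add: mult_closed add_closed)
qed

lemma is_ideal_sum:
  assumes "is_ideal r I" and "\<forall>x\<in>S. f x \<in> I"
  shows "sum f S \<in> I"
  using assms(2)
  by (induction S rule: infinite_finite_induct) (use assms(1) in \<open>auto simp: is_ideal_def\<close>)

lemma mon_ideal_subset_ideal:
  fixes I :: "('k::field) cpoly set"
  assumes I: "is_ideal r I" and gens: "monom1 ` A \<subseteq> I"
  shows "mon_ideal r A \<subseteq> I"
proof
  fix p :: "'k cpoly" assume p: "p \<in> mon_ideal r A"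
  have "Poly_Mapping.single \<alpha> (Poly_Mapping.lookup p \<alpha>) \<in> I" if \<alpha>: "\<alpha> \<in> Poly_Mapping.keys p" for \<alpha>
  proof -
    obtain \<beta> where \<beta>: "\<beta> \<in> A" "Poly_Mapping.lookup \<beta> \<le> Poly_Mapping.lookup \<alpha>"
      using p \<alpha> by (auto simp: mon_ideal_def)
    have "Poly_Mapping.keys (\<alpha> - \<beta>) \<subseteq> Poly_Mapping.keys \<alpha>"
      by (auto simp: in_keys_iff lookup_minus)
    then have cofactor: "Poly_Mapping.single (\<alpha> - \<beta>) (Poly_Mapping.lookup p \<alpha>) \<in> kE r"
      using p \<alpha> by (auto simp: mon_ideal_def kE_def)
    have "(\<alpha> - \<beta>) + \<beta> = \<alpha>"
      using \<beta>(2) by (intro poly_mapping_eqI) (simp add: lookup_add lookup_minus le_fun_def)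
    then have "Poly_Mapping.single \<alpha> (Poly_Mapping.lookup p \<alpha>)
        = Poly_Mapping.single (\<alpha> - \<beta>) (Poly_Mapping.lookup p \<alpha>) * monom1 \<beta>"
      by (simp add: monom1_def mult_single)
    with cofactor I gens \<beta>(1) show ?thesis
      by (auto simp: is_ideal_def)
  qed
  then have "(\<Sum>\<alpha>\<in>Poly_Mapping.keys p. Poly_Mapping.single \<alpha> (Poly_Mapping.lookup p \<alpha>)) \<in> I"
    by (intro is_ideal_sum[OF I]) blast
  then show "p \<in> I" by (simp add: sum_single_lookup)
qed

lemma ideal_gen_monom1:
  assumes "\<forall>\<beta>\<in>A. Poly_Mapping.keys \<beta> \<subseteq> Exc r"
  shows "ideal_gen r (monom1 ` A) = mon_ideal r A"
proof
  have "monom1 ` A \<subseteq> mon_ideal r A"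
    using assms by (auto simp: mon_ideal_def monom1_def kE_def)
  then show "ideal_gen r (monom1 ` A) \<subseteq> mon_ideal r A"
    unfolding ideal_gen_def using is_ideal_mon_ideal by blast
  show "mon_ideal r A \<subseteq> ideal_gen r (monom1 ` A)"
    unfolding ideal_gen_def using mon_ideal_subset_ideal by blast
qed

lemma monom1_power: "(monom1 \<mu> :: ('k::field) cpoly) ^ n = monom1 (\<Sum>i<n. \<mu>)"
  by (induction n) (simp_all add: monom1_def mult_single add.commute)

lemma saturation_mon_ideal_exponent:
  assumes "p \<in> saturation r (mon_ideal r A) (monom1 \<mu>)" and "\<alpha> \<in> Poly_Mapping.keys p"
  obtains n \<beta> where "\<beta> \<in> A"
    and "Poly_Mapping.lookup \<beta> \<le> (\<lambda>E. Poly_Mapping.lookup \<alpha> E + n * Poly_Mapping.lookup \<mu> E)"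
proof -
  obtain n :: nat where "monom1 (\<Sum>i<n. \<mu>) * p \<in> mon_ideal r A"
    using assms(1) by (auto simp: saturation_def monom1_power)
  moreover have "(\<Sum>i<n. \<mu>) + \<alpha> \<in> Poly_Mapping.keys (monom1 (\<Sum>i<n. \<mu>) * p)"
    using assms(2) by (simp add: monom1_def lookup_single_1_mult in_keys_iff)
  ultimately obtain \<beta> where "\<beta> \<in> A" "Poly_Mapping.lookup \<beta> \<le> Poly_Mapping.lookup ((\<Sum>i<n. \<mu>) + \<alpha>)"
    by (auto simp: mon_ideal_def)
  moreover have "Poly_Mapping.lookup ((\<Sum>i<n. \<mu>) + \<alpha>)
      = (\<lambda>E. Poly_Mapping.lookup \<alpha> E + n * Poly_Mapping.lookup \<mu> E)"
    by (simp add: lookup_add lookup_sum fun_eq_iff)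
  ultimately show thesis by (intro that) simp_all
qed

lemma mon_ideal_hcomp_eq_saturation:
  assumes "\<And>\<alpha> n \<beta>. Poly_Mapping.keys \<alpha> \<subseteq> Exc r \<Longrightarrow> mdeg \<alpha> = D \<Longrightarrow> \<beta> \<in> A \<Longrightarrow>
      Poly_Mapping.lookup \<beta> \<le> (\<lambda>E. Poly_Mapping.lookup \<alpha> E + n * Poly_Mapping.lookup \<mu> E) \<Longrightarrow>
      \<exists>\<beta>'\<in>A. Poly_Mapping.lookup \<beta>' \<le> Poly_Mapping.lookup \<alpha>"
  shows "mon_ideal r A \<inter> hcomp r D = saturation r (mon_ideal r A) (monom1 \<mu>) \<inter> hcomp r D"
proof
  show "mon_ideal r A \<inter> hcomp r D \<subseteq> saturation r (mon_ideal r A) (monom1 \<mu>) \<inter> hcomp r D"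
    by (auto simp: saturation_def mon_ideal_def intro: exI[of _ 0])
  show "saturation r (mon_ideal r A) (monom1 \<mu>) \<inter> hcomp r D \<subseteq> mon_ideal r A \<inter> hcomp r D"
  proof
    fix p :: "('k::field) cpoly" assume p: "p \<in> saturation r (mon_ideal r A) (monom1 \<mu>) \<inter> hcomp r D"
    have "\<exists>\<beta>'\<in>A. Poly_Mapping.lookup \<beta>' \<le> Poly_Mapping.lookup \<alpha>" if "\<alpha> \<in> Poly_Mapping.keys p" for \<alpha>
    proof -
      obtain n \<beta> where "\<beta> \<in> A"
        "Poly_Mapping.lookup \<beta> \<le> (\<lambda>E. Poly_Mapping.lookup \<alpha> E + n * Poly_Mapping.lookup \<mu> E)"
        using saturation_mon_ideal_exponent p \<open>\<alpha> \<in> Poly_Mapping.keys p\<close> by blast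
      moreover have "Poly_Mapping.keys \<alpha> \<subseteq> Exc r" "mdeg \<alpha> = D"
        using p \<open>\<alpha> \<in> Poly_Mapping.keys p\<close> by (auto simp: hcomp_def kE_def)
      ultimately show ?thesis using assms by blast
    qed
    with p show "p \<in> mon_ideal r A \<inter> hcomp r D"
      by (auto simp: mon_ideal_def hcomp_def)
  qed
qed

lemma shifted_domination_threshold:
  fixes w :: "'a \<Rightarrow> nat" and U A :: "('a \<Rightarrow> nat) set"
  assumes "finite U" and "finite {x. w x \<noteq> 0}"
  obtains c where "\<And>h n \<beta>. (\<lambda>x. if w x = 0 then h x else 0) \<in> U \<Longrightarrow> (\<And>x. c * w x \<le> h x) \<Longrightarrow>
    \<beta> \<in> A \<Longrightarrow> \<beta> \<le> (\<lambda>x. h x + n * w x) \<Longrightarrow> \<exists>\<beta>'\<in>A. \<beta>' \<le> h"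
proof -
  define bound where "bound g = (SOME k. \<exists>\<beta>\<in>A. \<beta> \<le> (\<lambda>x. g x + k * w x))" for g :: "'a \<Rightarrow> nat"
  show thesis
  proof (rule that[of "\<Sum>g\<in>U. bound g"])
    fix h :: "'a \<Rightarrow> nat" and n \<beta>
    define g where "g = (\<lambda>x. if w x = 0 then h x else 0)"
    assume "(\<lambda>x. if w x = 0 then h x else 0) \<in> U"
      and large: "\<And>x. (\<Sum>g\<in>U. bound g) * w x \<le> h x"
      and \<beta>: "\<beta> \<in> A" "\<beta> \<le> (\<lambda>x. h x + n * w x)"
    then have "g \<in> U" by (simp add: g_def)
    define K where "K = (\<Sum>x | w x \<noteq> 0. h x)"
    have "h x \<le> g x + K * w x" for x
    proof (cases "w x = 0")
      case False
      then have "h x \<le> K"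
        unfolding K_def using assms(2) by (intro member_le_sum) auto
      also have "\<dots> \<le> K * w x" using False by simp
      finally show ?thesis by simp
    qed (simp add: g_def)
    then have "\<beta> \<le> (\<lambda>x. g x + (n + K) * w x)"
      using \<beta>(2) by (auto simp: le_fun_def algebra_simps intro: order_trans)
    then have "\<exists>\<beta>\<in>A. \<beta> \<le> (\<lambda>x. g x + bound g * w x)"
      unfolding bound_def using \<beta>(1)
      by (intro someI_ex[of "\<lambda>k. \<exists>\<beta>\<in>A. \<beta> \<le> (\<lambda>x. g x + k * w x)"]) blast
    then obtain \<beta>' where \<beta>': "\<beta>' \<in> A" "\<beta>' \<le> (\<lambda>x. g x + bound g * w x)" by blast
    have "bound g \<le> (\<Sum>g\<in>U. bound g)"
      using \<open>g \<in> U\<close> assms(1) by (intro member_le_sum) auto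
    then have "bound g * w x \<le> h x" for x
      using large[of x] by (meson le_trans mult_le_mono1)
    then have "(\<lambda>x. g x + bound g * w x) \<le> h"
      by (auto simp: le_fun_def g_def)
    with \<beta>' show "\<exists>\<beta>'\<in>A. \<beta>' \<le> h" by (blast intro: order_trans)
  qed
qed

lemma inj_ecls: "inj ecls"
  by (rule injI) (metis ecls_def zero_neq_one)

lemma lookup_eprod: "Poly_Mapping.lookup (eprod r) E = (if E \<in> ecls ` {1..r} then 1 else 0)"
proof -
  have "eprod r = (\<Sum>E\<in>ecls ` {1..r}. Poly_Mapping.single E 1)"
    unfolding eprod_def by (simp add: sum.reindex inj_on_subset[OF inj_ecls])
  then show ?thesis
    by (simp add: lookup_sum lookup_single when_def)
qed

lemma Dcls_exponent_bounds:
  assumes "r \<le> 7" and keys: "Poly_Mapping.keys \<alpha> \<subseteq> Exc r" and deg: "mdeg \<alpha> = Dcls r m a"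
  shows "E \<notin> ecls ` {1..r} \<Longrightarrow> Poly_Mapping.lookup \<alpha> E \<le> m"
    and "j \<in> {1..r} \<Longrightarrow> a j \<le> int (Poly_Mapping.lookup \<alpha> (ecls j)) + int m"
proof -
  have nonneg: "0 \<le> E 0" if "E \<in> Poly_Mapping.keys \<alpha>" for E
    using that keys Exc_degree_bounds(1)[OF _ assms(1)] by blast
  have partial: "(\<Sum>E\<in>F. int (Poly_Mapping.lookup \<alpha> E) * E 0) \<le> int m"
    if "F \<subseteq> Poly_Mapping.keys \<alpha>" for F
  proof -
    have "(\<Sum>E\<in>F. int (Poly_Mapping.lookup \<alpha> E) * E 0) \<le> mdeg \<alpha> 0"
      unfolding mdeg_def using that nonneg by (intro sum_mono2) auto
    also have "\<dots> = int m"
      using deg by (simp add: Dcls_def)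
    finally show ?thesis .
  qed
  show "Poly_Mapping.lookup \<alpha> E \<le> m" if E: "E \<notin> ecls ` {1..r}" for E
  proof (cases "E \<in> Poly_Mapping.keys \<alpha>")
    case True
    then have "1 \<le> E 0"
      using keys E Exc_degree_pos[OF _ assms(1)] by blast
    then have "int (Poly_Mapping.lookup \<alpha> E) \<le> int (Poly_Mapping.lookup \<alpha> E) * E 0"
      by (simp add: mult_le_cancel_left1)
    also have "\<dots> \<le> int m"
      using partial[of "{E}"] True by simp
    finally show ?thesis by simp
  qed (simp add: in_keys_iff)
  show "a j \<le> int (Poly_Mapping.lookup \<alpha> (ecls j)) + int m" if j: "j \<in> {1..r}" for j
  proof -
    let ?others = "Poly_Mapping.keys \<alpha> - {ecls j}"
    have "a j = (\<Sum>E\<in>Poly_Mapping.keys \<alpha>. int (Poly_Mapping.lookup \<alpha> E) * E j)"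
      using deg j by (auto simp: mdeg_def Dcls_def fun_eq_iff dest: spec[of _ j])
    also have "\<dots> = int (Poly_Mapping.lookup \<alpha> (ecls j))
        + (\<Sum>E\<in>?others. int (Poly_Mapping.lookup \<alpha> E) * E j)"
      by (cases "ecls j \<in> Poly_Mapping.keys \<alpha>") (simp_all add: sum.remove in_keys_iff ecls_def)
    also have "(\<Sum>E\<in>?others. int (Poly_Mapping.lookup \<alpha> E) * E j)
        \<le> (\<Sum>E\<in>?others. int (Poly_Mapping.lookup \<alpha> E) * E 0)"
      using keys j nonneg Exc_coordinate_le_degree by (intro sum_mono mult_left_mono) auto
    also have "\<dots> \<le> int m"
      by (rule partial) blast
    finally show ?thesis by simp
  qed
qed

lemma mon_ideal_eq_saturation_large_Dcls:
  assumes "r \<le> 7"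
  shows "\<exists>N. \<forall>a. (\<forall>i\<in>{1..r}. N \<le> a i) \<longrightarrow>
    mon_ideal r A \<inter> hcomp r (Dcls r m a)
      = saturation r (mon_ideal r A) (monom1 (eprod r)) \<inter> hcomp r (Dcls r m a)"
proof -
  define w where "w = Poly_Mapping.lookup (eprod r)"
  define U where
    "U = {g :: pic \<Rightarrow> nat. \<forall>E. (E \<in> Exc r \<longrightarrow> g E \<in> {0..m}) \<and> (E \<notin> Exc r \<longrightarrow> g E = 0)}"
  have "finite U"
    unfolding U_def by (rule finite_set_of_finite_funs) (simp_all add: finite_Exc assms)
  moreover have "finite {E. w E \<noteq> 0}"
    by (rule finite_subset[of _ "ecls ` {1..r}"]) (auto simp: w_def lookup_eprod)
  ultimately obtain c where c: "\<And>h n \<beta>. (\<lambda>E. if w E = 0 then h E else 0) \<in> U \<Longrightarrow>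
      (\<And>E. c * w E \<le> h E) \<Longrightarrow> \<beta> \<in> Poly_Mapping.lookup ` A \<Longrightarrow> \<beta> \<le> (\<lambda>E. h E + n * w E) \<Longrightarrow>
      \<exists>\<beta>'\<in>Poly_Mapping.lookup ` A. \<beta>' \<le> h"
    using shifted_domination_threshold[of U w "Poly_Mapping.lookup ` A"] by blast
  show ?thesis
  proof (intro exI allI impI)
    fix a assume a: "\<forall>i\<in>{1..r}. int (c + m) \<le> a i"
    show "mon_ideal r A \<inter> hcomp r (Dcls r m a)
      = saturation r (mon_ideal r A) (monom1 (eprod r)) \<inter> hcomp r (Dcls r m a)"
    proof (rule mon_ideal_hcomp_eq_saturation)
      fix \<alpha> n \<beta>
      assume keys: "Poly_Mapping.keys \<alpha> \<subseteq> Exc r" and deg: "mdeg \<alpha> = Dcls r m a" and "\<beta> \<in> A"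
        and \<beta>: "Poly_Mapping.lookup \<beta>
          \<le> (\<lambda>E. Poly_Mapping.lookup \<alpha> E + n * Poly_Mapping.lookup (eprod r) E)"
      have "(\<lambda>E. if w E = 0 then Poly_Mapping.lookup \<alpha> E else 0) \<in> U"
        using Dcls_exponent_bounds(1)[OF assms keys deg] keys
        by (auto simp: U_def w_def lookup_eprod in_keys_iff)
      moreover have "c * w E \<le> Poly_Mapping.lookup \<alpha> E" for E
      proof (cases "E \<in> ecls ` {1..r}")
        case True
        then obtain j where "j \<in> {1..r}" "E = ecls j" by blast
        then show ?thesis
          using Dcls_exponent_bounds(2)[OF assms keys deg] a by (force simp: w_def lookup_eprod)
      qed (simp add: w_def lookup_eprod)
      ultimately have "\<exists>\<beta>'\<in>Poly_Mapping.lookup ` A. \<beta>' \<le> Poly_Mapping.lookup \<alpha>"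
        using \<open>\<beta> \<in> A\<close> \<beta> by (intro c[where n = n and \<beta> = "Poly_Mapping.lookup \<beta>"]) (auto simp: w_def)
      then show "\<exists>\<beta>'\<in>A. Poly_Mapping.lookup \<beta>' \<le> Poly_Mapping.lookup \<alpha>" by blast
    qed
  qed
qed

theorem mainTheorem17:
  fixes r m :: nat and M :: "('k::field) cpoly set"
  assumes "4 \<le> r" and "r \<le> 7"
    and "monomial_ideal r M"
    and "(\<exists>N c. \<forall>a. (\<forall>i\<in>{1..r}. a i \<ge> N) \<longrightarrow> qdim r M (Dcls r m a) = c)
       \<or> (\<exists>N c. \<forall>a. (\<forall>i\<in>{1..r}. a i \<ge> N) \<longrightarrow>
              qdim r (saturation r M (monom1 (eprod r))) (Dcls r m a) = c)"
  shows "\<exists>N. \<forall>a. (\<forall>i\<in>{1..r}. a i \<ge> N) \<longrightarrow>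
           qdim r M (Dcls r m a) = qdim r (saturation r M (monom1 (eprod r))) (Dcls r m a)"
proof -
  obtain A where M: "M = mon_ideal r A"
    using assms(3) ideal_gen_monom1 unfolding monomial_ideal_def by metis
  obtain N where "\<forall>a. (\<forall>i\<in>{1..r}. N \<le> a i) \<longrightarrow>
      M \<inter> hcomp r (Dcls r m a) = saturation r M (monom1 (eprod r)) \<inter> hcomp r (Dcls r m a)"
    using mon_ideal_eq_saturation_large_Dcls[OF assms(2), of A m] unfolding M by blast
  then show ?thesis
    by (auto simp: qdim_def intro!: exI[of _ N])
qed

end
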